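(* Let $h$ be a binary function symbol interpreted as associative and idempotent, let $a,b$ be distinct free constants, and let $x$ be a variable. Let $t = h(x,s_1,\ldots,s_n,x)$ with $n\ge 0$ and each $s_i\in\{x,a,b\}$ (an $(x,\{a,b\})$-simple word). Let $\sigma$ be a substitution with $x\sigma = s$, where $s\in\{h(a,b),h(b,a)\}$. Then $t\sigma \approx_{AI} s$.
   Context: Terms are built from a countable set of variables and a set of function symbols with fixed arities; substitutions map variables to terms, are the identity on all but finitely many variables, and are extended homomorphically to terms (written postfix, $t\sigma$). $AI$ denotes the equational theory generated by $h(x,h(y,z)) = h(h(x,y),z)$ and $h(x,x)=x$ for the symbol $h$ (all other symbols are free), and $s\approx_{AI} t$ means $s=t$ holds in every model of these axioms. Because $h$ is associative, $h(u_1,\ldots,u_m)$ for $m\ge 2$ denotes the flattened (any-bracketing) $h$-product of $u_1,\ldots,u_m$, and $h(u)$ denotes $u$. *)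

theory Defs
  imports Main
begin

datatype ('f, 'v) trm = Var 'v | Fun 'f "('f, 'v) trm list"

fun subst :: "('v \<Rightarrow> ('f, 'v) trm) \<Rightarrow> ('f, 'v) trm \<Rightarrow> ('f, 'v) trm" where
  "subst \<sigma> (Var y) = \<sigma> y"
| "subst \<sigma> (Fun f ts) = Fun f (map (subst \<sigma>) ts)"

fun hprod :: "'f \<Rightarrow> ('f, 'v) trm list \<Rightarrow> ('f, 'v) trm" where
  "hprod h [] = undefined"
| "hprod h [u] = u"
| "hprod h (u # v # us) = Fun h [u, hprod h (v # us)]"

fun eval :: "('f \<Rightarrow> 'a list \<Rightarrow> 'a) \<Rightarrow> ('v \<Rightarrow> 'a) \<Rightarrow> ('f, 'v) trm \<Rightarrow> 'a" where
  "eval I \<rho> (Var y) = \<rho> y"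
| "eval I \<rho> (Fun f ts) = I f (map (eval I \<rho>) ts)"

definition ai_model :: "'f \<Rightarrow> ('f \<Rightarrow> 'a list \<Rightarrow> 'a) \<Rightarrow> bool" where
  "ai_model h I \<longleftrightarrow>
     (\<forall>x y z. I h [x, I h [y, z]] = I h [I h [x, y], z]) \<and> (\<forall>x. I h [x, x] = x)"

end

theory Submission
  imports Defs
begin

text \<open>
  Under AI the term denotes \<open>e \<cdot> w \<cdot> e\<close> in a band, where \<open>e = pq\<close> (or \<open>qp\<close>) is the
  value of \<open>s\<close> and \<open>w\<close> is a product of letters from \<open>{p, q, e}\<close>. Right multiplication
  of \<open>e\<close> by such letters only ever yields \<open>e\<close> or \<open>qe\<close>, and \<open>e\<close> absorbs both from the left
  (\<open>e \<cdot> qe = pq\<cdot>q\<cdot>pq = pq\<cdot>pq = e\<close>), so the whole product collapses to \<open>e\<close>.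
\<close>

locale band = semigroup +
  assumes idem [simp]: "a \<^bold>* a = a"
begin

lemma left_idem [simp]: "a \<^bold>* (a \<^bold>* b) = a \<^bold>* b"
  by (simp flip: assoc)

lemma foldr_in_suffixes:
  assumes "set cs \<subseteq> {p, q, p \<^bold>* q}"
  shows "foldr (\<^bold>*) cs (p \<^bold>* q) \<in> {p \<^bold>* q, q \<^bold>* (p \<^bold>* q)}"
  using assms
proof (induction cs)
  case Nil
  then show ?case by simp
next
  case (Cons c cs)
  have "p \<^bold>* (q \<^bold>* (p \<^bold>* q)) = p \<^bold>* q"
    by (metis assoc idem)
  moreover have "p \<^bold>* q \<^bold>* (q \<^bold>* (p \<^bold>* q)) = p \<^bold>* q"
    by (metis assoc idem)
  ultimately show ?case
    using Cons by (auto simp: assoc)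
qed

lemma absorb_foldr:
  assumes "set cs \<subseteq> {p, q, p \<^bold>* q}"
  shows "p \<^bold>* q \<^bold>* foldr (\<^bold>*) cs (p \<^bold>* q) = p \<^bold>* q"
proof -
  have "p \<^bold>* q \<^bold>* (q \<^bold>* (p \<^bold>* q)) = p \<^bold>* q"
    by (metis assoc idem)
  then show ?thesis
    using foldr_in_suffixes [OF assms] by (auto simp: assoc)
qed

end

lemma ai_model_band: "ai_model h I \<Longrightarrow> band (\<lambda>u v. I h [u, v])"
  by unfold_locales (auto simp: ai_model_def)

lemma hprod_snoc: "hprod h (ts @ [t]) = foldr (\<lambda>u v. Fun h [u, v]) ts t"
proof (induction ts)
  case Nil
  then show ?case by simp
next
  case (Cons u ts)
  then show ?case by (cases ts) auto
qed

lemma eval_subst_foldr_Fun: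
  "eval I \<rho> (subst \<sigma> (foldr (\<lambda>u v. Fun h [u, v]) ts t))
     = foldr (\<lambda>u v. I h [u, v]) (map (eval I \<rho> \<circ> subst \<sigma>) ts) (eval I \<rho> (subst \<sigma> t))"
  by (induction ts) auto

theorem lemma1:
  fixes h a b :: 'f and x :: 'v and ss :: "('f, 'v) trm list"
    and \<sigma> :: "'v \<Rightarrow> ('f, 'v) trm" and s :: "('f, 'v) trm"
  assumes "a \<noteq> b" and "h \<noteq> a" and "h \<noteq> b"
    and "set ss \<subseteq> {Var x, Fun a [], Fun b []}"
    and "finite {y. \<sigma> y \<noteq> Var y}"
    and "s \<in> {Fun h [Fun a [], Fun b []], Fun h [Fun b [], Fun a []]}"
    and "\<sigma> x = s"
  shows "\<forall>(I :: 'f \<Rightarrow> 'a list \<Rightarrow> 'a) (\<rho> :: 'v \<Rightarrow> 'a). ai_model h I \<longrightarrow>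
           eval I \<rho> (subst \<sigma> (hprod h ([Var x] @ ss @ [Var x]))) = eval I \<rho> s"
proof (intro allI impI)
  fix I :: "'f \<Rightarrow> 'a list \<Rightarrow> 'a" and \<rho> :: "'v \<Rightarrow> 'a"
  assume "ai_model h I"
  then interpret band "\<lambda>u v. I h [u, v]"
    by (rule ai_model_band)
  define E where "E = eval I \<rho> \<circ> subst \<sigma>"
  let ?p = "I a []" and ?q = "I b []"
  have s_val: "eval I \<rho> s = I h [?p, ?q] \<or> eval I \<rho> s = I h [?q, ?p]"
    using assms(6) by auto
  have letters: "set (map E ss) \<subseteq> {?p, ?q, eval I \<rho> s}"
    using assms(4,7) by (auto simp: E_def)
  have "eval I \<rho> (subst \<sigma> (hprod h ([Var x] @ ss @ [Var x])))
      = I h [eval I \<rho> s, foldr (\<lambda>u v. I h [u, v]) (map E ss) (eval I \<rho> s)]"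
    using assms(7) hprod_snoc [of h "Var x # ss" "Var x"]
    by (simp add: eval_subst_foldr_Fun E_def)
  also have "\<dots> = eval I \<rho> s"
    using s_val letters absorb_foldr [of _ ?p ?q] absorb_foldr [of _ ?q ?p]
    by (auto simp: insert_commute)
  finally show "eval I \<rho> (subst \<sigma> (hprod h ([Var x] @ ss @ [Var x]))) = eval I \<rho> s" .
qed

end
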